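(* In the setting of the context, assume in addition that $\frac1q\|\cdot\|^q$ is $(q,\beta)$-uniformly convex w.r.t. $\|\cdot\|$ for some $\beta>0$. Let $i\ge1$, let $u_i\in\partial f(x_i)$ be the subgradient used in $E_i$, and let $\zeta_i\in\partial\bigl(\frac1q\|\cdot\|^q\bigr)(x_i-\hat x_{i-1})$. Then for any $\gamma_i'\in(0,\gamma]$, $$E_i\le a_i\Bigl\langle u_i+\frac{\gamma_i'A_i^{q-1}}{a_i^q}\zeta_i,\ \hat z_i-z_i\Bigr\rangle-\gamma_i'\Bigl(\frac{A_i^q}{q\,a_i^q}\|x_i-\hat x_{i-1}\|^q+\frac{\beta}{q}\|\hat z_i-z_i\|^q\Bigr).$$
   Context: $\|\cdot\|$ is a norm on $\mathbb{R}^d$. A function $\varphi:\mathbb{R}^d\to\mathbb{R}\cup\{+\infty\}$ is $(s,\sigma)$-uniformly convex w.r.t. $\|\cdot\|$ ($s\ge2$, $\sigma>0$) if $\varphi(y)\ge\varphi(x)+\langle\zeta,y-x\rangle+\frac{\sigma}{s}\|y-x\|^s$ for all $y$, all $x$ with $\partial\varphi(x)\ne\emptyset$ and all $\zeta\in\partial\varphi(x)$. $f=g+l$ with $g:\mathbb{R}^d\to\mathbb{R}$ convex and differentiable and $l:\mathbb{R}^d\to\mathbb{R}\cup\{+\infty\}$ proper, closed, convex. $\hat f(x;y):=g(y)+\langle\nabla g(y),x-y\rangle+l(x)$. Fix $q\ge2$, $\gamma>0$, $x_0\in\mathrm{dom}\,l$, and $h(\cdot;x_0):\mathbb{R}^d\to\mathbb{R}$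 convex with $h(x;x_0)\ge0$, $h(x;x_0)=0$ iff $x=x_0$, $(q,\gamma)$-uniformly convex w.r.t. $\|\cdot\|$. Let $a_1,a_2,\dots>0$, $A_0:=0$, $A_i:=A_{i-1}+a_i$. For points $x_1,x_2,\dots\in\mathrm{dom}\,\partial l$: $\psi_k(x):=\sum_{j=1}^ka_j\hat f(x;x_j)+h(x;x_0)$, $z_0:=x_0$, $z_k:=\operatorname{argmin}\psi_k$ ($k\ge 1$); $\hat x_{i-1}:=\frac{a_i}{A_i}z_{i-1}+\frac{A_{i-1}}{A_i}x_{i-1}$, $\hat z_i:=\frac{A_i}{a_i}x_i-\frac{A_{i-1}}{a_i}x_{i-1}$; for $u_i\in\partial f(x_i)=\nabla g(x_i)+\partial l(x_i)$, $E_i:=A_i\langle u_i,x_i-\frac{a_i}{A_i}z_i-\frac{A_{i-1}}{A_i}x_{i-1}\rangle-\frac{\gamma}{q}\|z_i-z_{i-1}\|^q$. *)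

theory Defs
  imports "HOL-Analysis.Analysis" "HOL-Library.Extended_Real"
begin

text \<open>An (arbitrary) norm on the space, distinct from the Euclidean one.\<close>
definition is_norm :: "('a::real_vector \<Rightarrow> real) \<Rightarrow> bool" where
  "is_norm N \<longleftrightarrow> (\<forall>x. N x = 0 \<longleftrightarrow> x = 0)
     \<and> (\<forall>c x. N (c *\<^sub>R x) = \<bar>c\<bar> * N x)
     \<and> (\<forall>x y. N (x + y) \<le> N x + N y)"

definition edom :: "('a \<Rightarrow> ereal) \<Rightarrow> 'a set" where
  "edom \<phi> = {x. \<phi> x < \<infinity>}"

definition eproper :: "('a \<Rightarrow> ereal) \<Rightarrow> bool" where
  "eproper \<phi> \<longleftrightarrow> (\<forall>x. \<phi> x \<noteq> -\<infinity>) \<and> edom \<phi> \<noteq> {}"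

definition eclosed :: "('a::topological_space \<Rightarrow> ereal) \<Rightarrow> bool" where
  "eclosed \<phi> \<longleftrightarrow> closed {(x, t::real). \<phi> x \<le> ereal t}"

definition econvex :: "('a::real_vector \<Rightarrow> ereal) \<Rightarrow> bool" where
  "econvex \<phi> \<longleftrightarrow> (\<forall>x y t. 0 \<le> t \<and> t \<le> 1 \<longrightarrow>
      \<phi> ((1 - t) *\<^sub>R x + t *\<^sub>R y) \<le> ereal (1 - t) * \<phi> x + ereal t * \<phi> y)"

text \<open>Subdifferential w.r.t. the standard inner product (empty outside the domain).\<close>
definition subdiff :: "('a::real_inner \<Rightarrow> ereal) \<Rightarrow> 'a \<Rightarrow> 'a set" where
  "subdiff \<phi> x = {\<zeta>. \<phi> x < \<infinity> \<and> (\<forall>y. \<phi> x + ereal (\<zeta> \<bullet> (y - x)) \<le> \<phi> y)}"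

text \<open>(s,\<sigma>)-uniform convexity w.r.t. the norm N (the constraints s \<ge> 2, \<sigma> > 0
  are imposed separately as hypotheses).\<close>
definition unif_convex ::
  "('a::real_inner \<Rightarrow> real) \<Rightarrow> real \<Rightarrow> real \<Rightarrow> ('a \<Rightarrow> ereal) \<Rightarrow> bool" where
  "unif_convex N s \<sigma> \<phi> \<longleftrightarrow> (\<forall>x y \<zeta>. \<zeta> \<in> subdiff \<phi> x \<longrightarrow>
      \<phi> x + ereal (\<zeta> \<bullet> (y - x)) + ereal (\<sigma> / s * N (y - x) powr s) \<le> \<phi> y)"

definition Acc :: "(nat \<Rightarrow> real) \<Rightarrow> nat \<Rightarrow> real" where
  "Acc a k = (\<Sum>j=1..k. a j)"

definition fhat :: "('a::real_inner \<Rightarrow> real) \<Rightarrow> ('a \<Rightarrow> 'a) \<Rightarrow> ('a \<Rightarrow> ereal) \<Rightarrow> 'a \<Rightarrow> 'a \<Rightarrow> ereal" where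
  "fhat g Dg l x y = ereal (g y + Dg y \<bullet> (x - y)) + l x"

definition psi :: "('a::real_inner \<Rightarrow> real) \<Rightarrow> ('a \<Rightarrow> 'a) \<Rightarrow> ('a \<Rightarrow> ereal) \<Rightarrow> ('a \<Rightarrow> real)
    \<Rightarrow> (nat \<Rightarrow> real) \<Rightarrow> (nat \<Rightarrow> 'a) \<Rightarrow> nat \<Rightarrow> 'a \<Rightarrow> ereal" where
  "psi g Dg l h a xs k x = (\<Sum>j=1..k. ereal (a j) * fhat g Dg l x (xs j)) + ereal (h x)"

end

theory Submission
  imports Defs
begin

text \<open>With \<open>t = A_i/a_i\<close>, \<open>p = x_i - xhat_{i-1}\<close> and \<open>v = zhat_i - z_i\<close>, the definitions
  of the hatted points give \<open>t p - v = z_i - z_{i-1}\<close> and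
  \<open>A_i (x_i - (a_i/A_i) z_i - (A_{i-1}/A_i) x_{i-1}) = a_i v\<close>. So the estimate is just the
  uniform convexity inequality of \<open>\<parallel>\<cdot>\<parallel>^q/q\<close> at \<open>p\<close>, tested at \<open>p - v/t\<close> and multiplied
  by \<open>\<gamma>' t^q\<close>; its right-hand side \<open>\<gamma>'/q \<parallel>z_i - z_{i-1}\<parallel>^q\<close> is absorbed by the
  term \<open>\<gamma>/q \<parallel>z_i - z_{i-1}\<parallel>^q\<close> of \<open>E_i\<close> because \<open>\<gamma>' \<le> \<gamma>\<close>.\<close>

lemma is_norm_nonneg: "is_norm N \<Longrightarrow> N x \<ge> 0"
proof -
  assume N: "is_norm N"
  have "N (x + - x) \<le> N x + N (- x)" and "N 0 = 0" and "N (- x) = N x"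
    using N unfolding is_norm_def by (metis scaleR_minus1_left abs_neg_one mult_1)+
  then show ?thesis by simp
qed

lemma is_norm_minus_commute: "is_norm N \<Longrightarrow> N (x - y) = N (y - x)"
  unfolding is_norm_def by (metis minus_diff_eq scaleR_minus1_left abs_neg_one mult_1)

lemma is_norm_scaleR_powr:
  assumes "is_norm N" "c > 0"
  shows "N (c *\<^sub>R x) powr q = c powr q * N x powr q"
  using assms is_norm_nonneg[OF assms(1)] unfolding is_norm_def by (simp add: powr_mult)

lemma unif_convex_realD:
  assumes "unif_convex N s \<sigma> (\<lambda>y. ereal (\<phi> y))" "\<zeta> \<in> subdiff (\<lambda>y. ereal (\<phi> y)) x"
  shows "\<phi> x + \<zeta> \<bullet> (y - x) + \<sigma> / s * N (y - x) powr s \<le> \<phi> y"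
  using assms unfolding unif_convex_def by (metis plus_ereal.simps(1) ereal_less_eq(3))

lemma power_norm_uniform_convexity_scaled:
  assumes N: "is_norm N"
    and uc: "unif_convex N q \<beta> (\<lambda>y. ereal (N y powr q / q))"
    and \<zeta>: "\<zeta> \<in> subdiff (\<lambda>y. ereal (N y powr q / q)) p"
    and t: "t > 0"
  shows "t powr q * N p powr q / q - t powr (q - 1) * (\<zeta> \<bullet> v) + \<beta> / q * N v powr q
           \<le> N (t *\<^sub>R p - v) powr q / q"
proof -
  have "N (p - (1 / t) *\<^sub>R v) powr q = N (t *\<^sub>R p - v) powr q / t powr q"
    using is_norm_scaleR_powr[OF N t, of "p - (1 / t) *\<^sub>R v" q] t
    by (simp add: scaleR_diff_right)
  moreover have "N (- (1 / t) *\<^sub>R v) powr q = N v powr q / t powr q"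
    using is_norm_scaleR_powr[OF N, of "1 / t" "- v" q] is_norm_minus_commute[OF N, of 0 v] t
    by (simp add: powr_divide)
  moreover have "N p powr q / q + \<zeta> \<bullet> (- (1 / t) *\<^sub>R v) + \<beta> / q * N (- (1 / t) *\<^sub>R v) powr q
                   \<le> N (p - (1 / t) *\<^sub>R v) powr q / q"
    using unif_convex_realD[OF uc \<zeta>, of "p - (1 / t) *\<^sub>R v"] by simp
  ultimately have "t powr q * (N p powr q / q - (\<zeta> \<bullet> v) / t + \<beta> / q * (N v powr q / t powr q))
                     \<le> t powr q * (N (t *\<^sub>R p - v) powr q / t powr q / q)"
    using t by (intro mult_left_mono) auto
  then show ?thesis
    using t by (simp add: powr_diff field_simps)
qed

lemma Acc_pos: "(\<And>j. j \<ge> 1 \<Longrightarrow> a j > 0) \<Longrightarrow> k \<ge> 1 \<Longrightarrow> Acc a k > 0"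
  unfolding Acc_def by (intro sum_pos) auto

lemma extrapolation_identity:
  fixes x z x' z' :: "'a::real_vector"
  assumes "a \<noteq> 0" "A \<noteq> 0"
  shows "(A / a) *\<^sub>R (x - ((a / A) *\<^sub>R z' + (A' / A) *\<^sub>R x'))
           - (((A / a) *\<^sub>R x - (A' / a) *\<^sub>R x') - z) = z - z'"
  using assms by (simp add: algebra_simps)

lemma coupling_identity:
  fixes x z x' :: "'a::real_vector"
  assumes "a \<noteq> 0" "A \<noteq> 0"
  shows "A *\<^sub>R (x - (a / A) *\<^sub>R z - (A' / A) *\<^sub>R x') = a *\<^sub>R (((A / a) *\<^sub>R x - (A' / a) *\<^sub>R x') - z)"
  using assms by (simp add: algebra_simps)

theorem mainTheorem8:
  fixes N :: "'a::euclidean_space \<Rightarrow> real"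
    and g :: "'a \<Rightarrow> real" and Dg :: "'a \<Rightarrow> 'a"
    and l :: "'a \<Rightarrow> ereal"
    and h :: "'a \<Rightarrow> real" and x0 :: 'a
    and q \<gamma> \<beta> :: real
    and a :: "nat \<Rightarrow> real" and x z :: "nat \<Rightarrow> 'a"
    and i :: nat and u \<zeta> :: 'a and \<gamma>' :: real
  assumes N: "is_norm N"
    and g_convex: "convex_on UNIV g"
    and g_grad: "\<And>y. (g has_derivative (\<lambda>v. Dg y \<bullet> v)) (at y)"
    and l_proper: "eproper l" and l_closed: "eclosed l" and l_convex: "econvex l"
    and q: "q \<ge> 2" and \<gamma>: "\<gamma> > 0"
    and x0: "x0 \<in> edom l"
    and h_convex: "convex_on UNIV h"
    and h_nonneg: "\<And>y. h y \<ge> 0"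
    and h_zero: "\<And>y. h y = 0 \<longleftrightarrow> y = x0"
    and h_uc: "unif_convex N q \<gamma> (\<lambda>y. ereal (h y))"
    and a_pos: "\<And>j. j \<ge> 1 \<Longrightarrow> a j > 0"
    and x_0: "x 0 = x0"
    and x_dom: "\<And>j. j \<ge> 1 \<Longrightarrow> subdiff l (x j) \<noteq> {}"
    and z_0: "z 0 = x0"
    and z_min: "\<And>k y. k \<ge> 1 \<Longrightarrow> psi g Dg l h a x k (z k) \<le> psi g Dg l h a x k y"
    and \<beta>: "\<beta> > 0"
    and norm_uc: "unif_convex N q \<beta> (\<lambda>y. ereal (N y powr q / q))"
    and i: "i \<ge> 1"
    and u: "u - Dg (x i) \<in> subdiff l (x i)"
    and \<zeta>: "\<zeta> \<in> subdiff (\<lambda>y. ereal (N y powr q / q))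
               (x i - ((a i / Acc a i) *\<^sub>R z (i - 1) + (Acc a (i - 1) / Acc a i) *\<^sub>R x (i - 1)))"
    and \<gamma>': "0 < \<gamma>'" "\<gamma>' \<le> \<gamma>"
  shows
    "(let A = Acc a i; A' = Acc a (i - 1);
          xh = (a i / A) *\<^sub>R z (i - 1) + (A' / A) *\<^sub>R x (i - 1);
          zh = (A / a i) *\<^sub>R x i - (A' / a i) *\<^sub>R x (i - 1);
          E = A * (u \<bullet> (x i - (a i / A) *\<^sub>R z i - (A' / A) *\<^sub>R x (i - 1)))
              - \<gamma> / q * N (z i - z (i - 1)) powr q
      in E \<le> a i * ((u + (\<gamma>' * A powr (q - 1) / a i powr q) *\<^sub>R \<zeta>) \<bullet> (zh - z i))
              - \<gamma>' * (A powr q / (q * a i powr q) * N (x i - xh) powr q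
                       + \<beta> / q * N (zh - z i) powr q))"
proof -
  define A where "A = Acc a i"
  define A' where "A' = Acc a (i - 1)"
  define xh where "xh = (a i / A) *\<^sub>R z (i - 1) + (A' / A) *\<^sub>R x (i - 1)"
  define zh where "zh = (A / a i) *\<^sub>R x i - (A' / a i) *\<^sub>R x (i - 1)"
  define t where "t = A / a i"
  have ai: "a i > 0" using a_pos i by simp
  have A: "A > 0" unfolding A_def using Acc_pos[OF a_pos i] .
  have t: "t > 0" unfolding t_def using A ai by simp
  have extrapolation: "t *\<^sub>R (x i - xh) - (zh - z i) = z i - z (i - 1)"
    unfolding t_def xh_def zh_def using ai A by (intro extrapolation_identity) auto
  have "A *\<^sub>R (x i - (a i / A) *\<^sub>R z i - (A' / A) *\<^sub>R x (i - 1)) = a i *\<^sub>R (zh - z i)"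
    unfolding zh_def using ai A by (intro coupling_identity) auto
  then have E: "A * (u \<bullet> (x i - (a i / A) *\<^sub>R z i - (A' / A) *\<^sub>R x (i - 1))) = a i * (u \<bullet> (zh - z i))"
    by (metis inner_scaleR_right)
  have \<zeta>': "\<zeta> \<in> subdiff (\<lambda>y. ereal (N y powr q / q)) (x i - xh)"
    using \<zeta> unfolding xh_def A_def A'_def .
  have scaled: "t powr q * N (x i - xh) powr q / q - t powr (q - 1) * (\<zeta> \<bullet> (zh - z i))
                  + \<beta> / q * N (zh - z i) powr q \<le> N (z i - z (i - 1)) powr q / q"
    using power_norm_uniform_convexity_scaled[OF N norm_uc \<zeta>' t, of "zh - z i"]
    unfolding extrapolation .
  have "\<gamma>' * (N (z i - z (i - 1)) powr q / q) \<le> \<gamma> / q * N (z i - z (i - 1)) powr q"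
    using \<gamma>' q by (simp add: mult_right_mono divide_right_mono)
  with scaled \<gamma>' have bound:
    "\<gamma>' * (t powr q * N (x i - xh) powr q / q - t powr (q - 1) * (\<zeta> \<bullet> (zh - z i))
        + \<beta> / q * N (zh - z i) powr q) \<le> \<gamma> / q * N (z i - z (i - 1)) powr q"
    by (meson mult_left_mono less_imp_le order_trans)
  have coefficient: "a i * (\<gamma>' * A powr (q - 1) / a i powr q) = \<gamma>' * t powr (q - 1)"
    unfolding t_def using ai A by (simp add: powr_divide powr_diff field_simps)
  have rhs: "a i * ((u + (\<gamma>' * A powr (q - 1) / a i powr q) *\<^sub>R \<zeta>) \<bullet> (zh - z i))
                    = a i * (u \<bullet> (zh - z i)) + \<gamma>' * t powr (q - 1) * (\<zeta> \<bullet> (zh - z i))"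
    by (simp only: inner_add_left inner_scaleR_left distrib_left mult.assoc[symmetric] coefficient)
  have "A powr q / (q * a i powr q) = t powr q / q"
    unfolding t_def using ai A by (simp add: powr_divide field_simps)
  then show ?thesis
    using bound unfolding Let_def A_def[symmetric] A'_def[symmetric] xh_def[symmetric] zh_def[symmetric] E rhs
    by (simp add: algebra_simps)
qed

end
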